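(* Suppose $|X|\ge3$. If a random choice rule $p$ on $X$ is consistent with the persistent craving model, then $p$ does not satisfy regularity, i.e. there exist $x\in A\subseteq B\subseteq X$ with $p(x,A)<p(x,B)$.
   Context: $X$ is a finite set, $\mathcal{X}$ its nonempty subsets, $\mathcal{L}(X)$ its linear orders, $M(\succ,A)$ the $\succ$-maximal element of $A$, $N(x,A)=\{\succ: x\succ y\ \forall y\in A\setminus\{x\}\}$. A random choice rule is $p:X\times\mathcal{X}\to[0,1]$ with $p(x,A)\ge0$ and $\sum_{x\in A}p(x,A)=1$. Given a linear order $\rhd$, the craving preferences $\{\succ_x\}_{x\in X}$ are defined by: $x\succ_x y$ for all $y\ne x$, and for $y,z\ne x$, $y\succ_x z$ iff $y\rhd z$. A distribution $\nu\in\Delta(\mathcal{L}(X))$ supported on $\{\succ_x\}_{x\in X}$ is craving monotonic w.r.t. $\rhd$ if $x\rhd y$ implies $\nu(\succ_x)>\nu(\succ_y)>0$. A persistence function is $\phi:X^2\to[0,1)$ with $\phi(x,x)=0$ and $\phi(x,y)>0$ for $x\ne y$. The transition function $t:X\times\mathcal{L}(X)\to\Delta(\mathcal{L}(X))$ has a persistent craving representation $(\rhd,\nu,\phi)$ if $t(x,\succ_y)=\phi(x,y)\delta_{\succ_y}+(1-\phi(x,y))\nu$ for all $x,y$, and $t(x,\succ)=\nu$ for every $\succ$ outside the support of $\nu$ ($\delta_{\succ}$ is the point mass). For each $A\in\mathcal{X}$, $\nu_A$ is the (unique) stationary distribution of the Markov chain on $\mathcal{L}(X)$ with transition probabilities $m_A(\succ,\succ')=t_{\succ'}(M(\succ,A),\succ)$.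 $p$ is consistent with the persistent craving model if there is such a $t$ (with some $\rhd$, craving monotonic $\nu$, persistence function $\phi$) with $p(x,A)=\sum_{\succ\in N(x,A)}\nu_A(\succ)$ for all $x\in A\in\mathcal{X}$. *)

theory Defs
  imports Complex_Main
begin

text \<open>Linear orders on X are represented as strict total orders (relations) on X.
  A pair (x,y) in r means x is strictly preferred to y.\<close>

definition linorders :: "'a set \<Rightarrow> 'a rel set" where
  "linorders X = {r. r \<subseteq> X \<times> X \<and> strict_linear_order_on X r}"

definition maxel :: "'a rel \<Rightarrow> 'a set \<Rightarrow> 'a" where
  "maxel r A = (THE x. x \<in> A \<and> (\<forall>y\<in>A - {x}. (x, y) \<in> r))"

definition Nset :: "'a set \<Rightarrow> 'a \<Rightarrow> 'a set \<Rightarrow> 'a rel set" where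
  "Nset X x A = {r \<in> linorders X. \<forall>y\<in>A - {x}. (x, y) \<in> r}"

definition random_choice_rule :: "'a set \<Rightarrow> ('a \<Rightarrow> 'a set \<Rightarrow> real) \<Rightarrow> bool" where
  "random_choice_rule X p \<longleftrightarrow>
     (\<forall>A. A \<subseteq> X \<and> A \<noteq> {} \<longrightarrow>
        (\<forall>x\<in>X. 0 \<le> p x A \<and> p x A \<le> 1) \<and> (\<Sum>x\<in>A. p x A) = 1)"

definition craving :: "'a set \<Rightarrow> 'a rel \<Rightarrow> 'a \<Rightarrow> 'a rel" where
  "craving X rh x = {(y, z). y \<in> X \<and> z \<in> X \<and> y \<noteq> z \<and>
                         (y = x \<or> (z \<noteq> x \<and> (y, z) \<in> rh))}"

definition distr_on :: "'a set \<Rightarrow> ('a rel \<Rightarrow> real) \<Rightarrow> bool" where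
  "distr_on X \<mu> \<longleftrightarrow> (\<forall>r\<in>linorders X. 0 \<le> \<mu> r) \<and> (\<Sum>r\<in>linorders X. \<mu> r) = 1"

definition craving_monotonic :: "'a set \<Rightarrow> 'a rel \<Rightarrow> ('a rel \<Rightarrow> real) \<Rightarrow> bool" where
  "craving_monotonic X rh \<nu> \<longleftrightarrow>
     distr_on X \<nu> \<and>
     (\<forall>r\<in>linorders X. r \<notin> craving X rh ` X \<longrightarrow> \<nu> r = 0) \<and>
     (\<forall>x\<in>X. \<forall>y\<in>X. (x, y) \<in> rh \<longrightarrow>
        \<nu> (craving X rh x) > \<nu> (craving X rh y) \<and> \<nu> (craving X rh y) > 0)"

definition persistence :: "'a set \<Rightarrow> ('a \<Rightarrow> 'a \<Rightarrow> real) \<Rightarrow> bool" where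
  "persistence X \<phi> \<longleftrightarrow>
     (\<forall>x\<in>X. \<forall>y\<in>X. 0 \<le> \<phi> x y \<and> \<phi> x y < 1) \<and>
     (\<forall>x\<in>X. \<phi> x x = 0) \<and>
     (\<forall>x\<in>X. \<forall>y\<in>X. x \<noteq> y \<longrightarrow> 0 < \<phi> x y)"

text \<open>t x r r' is the probability of moving to r' given choice x under preference r.\<close>
definition persistent_craving_rep ::
  "'a set \<Rightarrow> ('a \<Rightarrow> 'a rel \<Rightarrow> 'a rel \<Rightarrow> real) \<Rightarrow> 'a rel \<Rightarrow> ('a rel \<Rightarrow> real)
     \<Rightarrow> ('a \<Rightarrow> 'a \<Rightarrow> real) \<Rightarrow> bool" where
  "persistent_craving_rep X t rh \<nu> \<phi> \<longleftrightarrow>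
     rh \<in> linorders X \<and> craving_monotonic X rh \<nu> \<and> persistence X \<phi> \<and>
     (\<forall>x\<in>X. \<forall>y\<in>X. \<forall>r'\<in>linorders X.
        t x (craving X rh y) r' =
          \<phi> x y * (if r' = craving X rh y then 1 else 0) + (1 - \<phi> x y) * \<nu> r') \<and>
     (\<forall>x\<in>X. \<forall>r\<in>linorders X. \<nu> r = 0 \<longrightarrow> (\<forall>r'\<in>linorders X. t x r r' = \<nu> r'))"

definition stationary :: "'a set \<Rightarrow> ('a \<Rightarrow> 'a rel \<Rightarrow> 'a rel \<Rightarrow> real) \<Rightarrow> 'a set
     \<Rightarrow> ('a rel \<Rightarrow> real) \<Rightarrow> bool" where
  "stationary X t A \<mu> \<longleftrightarrow> distr_on X \<mu> \<and>
     (\<forall>r'\<in>linorders X. \<mu> r' = (\<Sum>r\<in>linorders X. \<mu> r * t (maxel r A) r r'))"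

definition stat_distr :: "'a set \<Rightarrow> ('a \<Rightarrow> 'a rel \<Rightarrow> 'a rel \<Rightarrow> real) \<Rightarrow> 'a set
     \<Rightarrow> ('a rel \<Rightarrow> real)" where
  "stat_distr X t A = (THE \<mu>. stationary X t A \<mu> \<and> (\<forall>r. r \<notin> linorders X \<longrightarrow> \<mu> r = 0))"

definition consistent_persistent_craving ::
  "'a set \<Rightarrow> ('a \<Rightarrow> 'a set \<Rightarrow> real) \<Rightarrow> bool" where
  "consistent_persistent_craving X p \<longleftrightarrow>
     (\<exists>t rh \<nu> \<phi>. persistent_craving_rep X t rh \<nu> \<phi> \<and>
        (\<forall>A. A \<subseteq> X \<and> A \<noteq> {} \<longrightarrow>
           (\<forall>x\<in>A. p x A = (\<Sum>r\<in>Nset X x A. stat_distr X t A r))))"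

end

theory Submission imports Defs begin

text \<open>For a menu A the preference chain of the persistent craving model redraws its state from \<nu>,
  except that at the craving preference \<open>\<succ>\<^sub>y\<close> it first keeps it with probability
  \<open>\<phi>(M(\<succ>\<^sub>y, A), y)\<close>. A chain of this shape has stationary distribution proportional
  to \<open>\<nu>(\<succ>) / (1 - stay probability)\<close>. On the full menu every \<open>\<succ>\<^sub>y\<close> chooses y itself, nothing
  persists, and \<open>\<nu>\<^sub>X = \<nu>\<close>, so \<open>p(b, X) \<ge> \<nu>(\<succ>\<^sub>b)\<close>. On a pair {a, b} with \<open>a \<rhd> b\<close>, the only order in
  the support of \<nu> choosing b is \<open>\<succ>\<^sub>b\<close>, which does not persist, while for a third alternative c the
  order \<open>\<succ>\<^sub>c\<close> chooses a and persists; the normaliser therefore exceeds 1 and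
  \<open>p(b, {a, b}) = \<nu>(\<succ>\<^sub>b) / S < \<nu>(\<succ>\<^sub>b) \<le> p(b, X)\<close>.\<close>

definition stationary_on :: "'b set \<Rightarrow> ('b \<Rightarrow> 'b \<Rightarrow> real) \<Rightarrow> ('b \<Rightarrow> real) \<Rightarrow> bool" where
  "stationary_on L T \<mu> \<longleftrightarrow>
     (\<forall>r\<in>L. 0 \<le> \<mu> r) \<and> sum \<mu> L = 1 \<and> (\<forall>r'\<in>L. \<mu> r' = (\<Sum>r\<in>L. \<mu> r * T r r')) \<and>
     (\<forall>r. r \<notin> L \<longrightarrow> \<mu> r = 0)"

lemma resampling_balance:
  fixes T :: "'b \<Rightarrow> 'b \<Rightarrow> real"
  assumes "finite L" "r' \<in> L"
    and T: "\<forall>r\<in>L. T r r' = g r * (if r' = r then 1 else 0) + (1 - g r) * \<nu> r'"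
  shows "(\<Sum>r\<in>L. \<mu> r * T r r') = g r' * \<mu> r' + \<nu> r' * (\<Sum>r\<in>L. \<mu> r * (1 - g r))"
proof -
  have "(\<Sum>r\<in>L. \<mu> r * T r r') =
      (\<Sum>r\<in>L. (if r = r' then g r * \<mu> r else 0) + \<nu> r' * (\<mu> r * (1 - g r)))"
  proof (rule sum.cong)
    fix r assume "r \<in> L"
    then have T_r: "T r r' = g r * (if r' = r then 1 else 0) + (1 - g r) * \<nu> r'" using T by blast
    show "\<mu> r * T r r' = (if r = r' then g r * \<mu> r else 0) + \<nu> r' * (\<mu> r * (1 - g r))"
      unfolding T_r by (cases "r = r'") (simp_all add: algebra_simps)
  qed simp
  also have "\<dots> = g r' * \<mu> r' + \<nu> r' * (\<Sum>r\<in>L. \<mu> r * (1 - g r))"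
    using assms(1,2) by (simp add: sum.distrib sum_distrib_left)
  finally show ?thesis .
qed

context
  fixes L :: "'b set" and \<nu> g :: "'b \<Rightarrow> real"
  assumes finite: "finite L" and \<nu>_nonneg: "\<forall>r\<in>L. 0 \<le> \<nu> r" and \<nu>_sum: "sum \<nu> L = 1"
    and g_range: "\<forall>r\<in>L. 0 \<le> g r \<and> g r < 1"
begin

lemma le_resampling_weight: "r \<in> L \<Longrightarrow> \<nu> r \<le> \<nu> r / (1 - g r)"
  using \<nu>_nonneg g_range by (simp add: le_divide_eq mult_left_le)

lemma resampling_weights_sum_gt_1:
  assumes "r \<in> L" "0 < \<nu> r" "0 < g r"
  shows "1 < (\<Sum>q\<in>L. \<nu> q / (1 - g q))"
proof -
  have "\<nu> r < \<nu> r / (1 - g r)"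
    using assms g_range by (simp add: less_divide_eq)
  then have "sum \<nu> L < (\<Sum>q\<in>L. \<nu> q / (1 - g q))"
    using assms(1) le_resampling_weight by (intro sum_strict_mono_ex1[OF finite]) auto
  then show ?thesis using \<nu>_sum by simp
qed

lemma resampling_weights_sum_pos: "0 < (\<Sum>q\<in>L. \<nu> q / (1 - g q))"
proof -
  have "sum \<nu> L \<le> (\<Sum>q\<in>L. \<nu> q / (1 - g q))"
    using le_resampling_weight by (intro sum_mono) auto
  then show ?thesis using \<nu>_sum by simp
qed

lemma stationary_on_resampling_iff:
  assumes T: "\<forall>r\<in>L. \<forall>r'\<in>L. T r r' = g r * (if r' = r then 1 else 0) + (1 - g r) * \<nu> r'"
  shows "stationary_on L T \<mu> \<longleftrightarrow>
    \<mu> = (\<lambda>r. if r \<in> L then \<nu> r / (1 - g r) / (\<Sum>q\<in>L. \<nu> q / (1 - g q)) else 0)"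
proof -
  define S where "S = (\<Sum>q\<in>L. \<nu> q / (1 - g q))"
  define \<mu>\<^sub>0 where "\<mu>\<^sub>0 = (\<lambda>r. if r \<in> L then \<nu> r / (1 - g r) / S else 0)"
  have "S > 0" unfolding S_def by (rule resampling_weights_sum_pos)
  have balance: "(\<Sum>r\<in>L. \<mu> r * T r r') = g r' * \<mu> r' + \<nu> r' * (\<Sum>r\<in>L. \<mu> r * (1 - g r))"
    if "r' \<in> L" for \<mu> r'
    using resampling_balance[OF finite that] T that by blast
  have "\<mu> = \<mu>\<^sub>0" if stat: "stationary_on L T \<mu>"
  proof -
    define K where "K = (\<Sum>r\<in>L. \<mu> r * (1 - g r))"
    have fixpoint: "\<forall>r\<in>L. \<mu> r = (\<Sum>q\<in>L. \<mu> q * T q r)" and "sum \<mu> L = 1"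
      and outside: "\<forall>r. r \<notin> L \<longrightarrow> \<mu> r = 0"
      using stat unfolding stationary_on_def by auto
    have \<mu>_eq: "\<mu> r = \<nu> r / (1 - g r) * K" if "r \<in> L" for r
    proof -
      have "\<mu> r = (\<Sum>q\<in>L. \<mu> q * T q r)" using fixpoint that by blast
      also have "\<dots> = g r * \<mu> r + \<nu> r * K" unfolding K_def by (rule balance[OF that])
      finally have "\<mu> r = g r * \<mu> r + \<nu> r * K" .
      moreover have "g r < 1" using g_range that by auto
      ultimately show ?thesis by (simp add: field_simps)
    qed
    have "1 = (\<Sum>r\<in>L. \<nu> r / (1 - g r) * K)"
      using \<open>sum \<mu> L = 1\<close> \<mu>_eq by (simp cong: sum.cong)
    also have "\<dots> = S * K" unfolding S_def by (simp add: sum_distrib_right)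
    finally have "K = 1 / S" using \<open>S > 0\<close> by (simp add: field_simps)
    then show ?thesis
      using \<mu>_eq outside unfolding \<mu>\<^sub>0_def by (auto simp: fun_eq_iff)
  qed
  moreover have "stationary_on L T \<mu>\<^sub>0"
  proof -
    have "(\<Sum>r\<in>L. \<mu>\<^sub>0 r * (1 - g r)) = (\<Sum>r\<in>L. \<nu> r / S)"
      using g_range unfolding \<mu>\<^sub>0_def by (intro sum.cong) auto
    also have "\<dots> = 1 / S" using \<nu>_sum by (simp add: sum_divide_distrib[symmetric])
    finally have K: "(\<Sum>r\<in>L. \<mu>\<^sub>0 r * (1 - g r)) = 1 / S" .
    have "\<mu>\<^sub>0 r = (\<Sum>q\<in>L. \<mu>\<^sub>0 q * T q r)" if "r \<in> L" for r
    proof -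
      have "g r < 1" using g_range that by auto
      then show ?thesis
        unfolding balance[OF that] K using that \<open>S > 0\<close> by (simp add: \<mu>\<^sub>0_def field_simps)
    qed
    moreover have "sum \<mu>\<^sub>0 L = (\<Sum>r\<in>L. \<nu> r / (1 - g r)) / S"
      unfolding \<mu>\<^sub>0_def by (simp add: sum_divide_distrib)
    then have "sum \<mu>\<^sub>0 L = 1" using \<open>S > 0\<close> unfolding S_def by simp
    moreover have "\<forall>r\<in>L. 0 \<le> \<mu>\<^sub>0 r"
      using \<nu>_nonneg g_range \<open>S > 0\<close> unfolding \<mu>\<^sub>0_def by (simp add: less_imp_le)
    moreover have "\<forall>r. r \<notin> L \<longrightarrow> \<mu>\<^sub>0 r = 0" unfolding \<mu>\<^sub>0_def by simp
    ultimately show ?thesis unfolding stationary_on_def by blast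
  qed
  ultimately show ?thesis unfolding \<mu>\<^sub>0_def S_def by blast
qed

end

lemma finite_linorders: "finite X \<Longrightarrow> finite (linorders X)"
  by (rule finite_subset[of _ "Pow (X \<times> X)"]) (auto simp: linorders_def)

lemma linordersD:
  assumes "r \<in> linorders X"
  shows "r \<subseteq> X \<times> X" "trans r" "irrefl r" "total_on X r"
  using assms by (auto simp: linorders_def strict_linear_order_on_def)

lemma maxel_eqI:
  assumes "r \<in> linorders X" "x \<in> A" "\<forall>y\<in>A - {x}. (x, y) \<in> r"
  shows "maxel r A = x"
  unfolding maxel_def
proof (rule the_equality)
  fix x' assume x': "x' \<in> A \<and> (\<forall>y\<in>A - {x'}. (x', y) \<in> r)"
  show "x' = x"
  proof (rule ccontr)
    assume "x' \<noteq> x"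
    then have "(x, x') \<in> r" "(x', x) \<in> r" using x' assms(2,3) by auto
    then show False using linordersD(2,3)[OF assms(1)] by (meson irrefl_def transD)
  qed
qed (use assms(2,3) in blast)

lemma maxel_in:
  assumes "r \<in> linorders X" "finite X" "A \<subseteq> X" "A \<noteq> {}"
  shows "maxel r A \<in> A"
proof -
  have "finite r" using linordersD(1)[OF assms(1)] assms(2) by (simp add: finite_subset)
  moreover have "acyclic r"
    using linordersD(2,3)[OF assms(1)] unfolding acyclic_irrefl by (simp only: trancl_id)
  ultimately have "wf r" by (rule finite_acyclic_wf)
  then obtain m where "m \<in> A" and undominated: "\<And>y. (y, m) \<in> r \<Longrightarrow> y \<notin> A"
    using wfE_min'[OF _ assms(4)] by blast
  have "(m, y) \<in> r" if "y \<in> A - {m}" for y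
  proof -
    have "(m, y) \<in> r \<or> (y, m) \<in> r"
      using linordersD(4)[OF assms(1)] \<open>m \<in> A\<close> that assms(3) unfolding total_on_def by blast
    then show ?thesis using undominated that by blast
  qed
  then have "maxel r A = m" using maxel_eqI[OF assms(1) \<open>m \<in> A\<close>] by blast
  then show ?thesis using \<open>m \<in> A\<close> by simp
qed

lemma craving_in_linorders:
  assumes "rh \<in> linorders X" "y \<in> X"
  shows "craving X rh y \<in> linorders X"
proof -
  have "trans rh" "irrefl rh" "total_on X rh" using linordersD[OF assms(1)] by auto
  then show ?thesis
    unfolding linorders_def strict_linear_order_on_def craving_def trans_def irrefl_def total_on_def
    by auto
qed

lemma craving_top: "y \<in> X \<Longrightarrow> z \<in> X \<Longrightarrow> z \<noteq> y \<Longrightarrow> (y, z) \<in> craving X rh y"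
  unfolding craving_def by auto

lemma inj_on_craving: "inj_on (craving X rh) X"
  by (rule inj_onI) (auto simp: craving_def set_eq_iff)

lemma maxel_craving_self:
  assumes "rh \<in> linorders X" "A \<subseteq> X" "y \<in> A"
  shows "maxel (craving X rh y) A = y"
  using assms by (intro maxel_eqI[OF craving_in_linorders]) (auto intro: craving_top)

lemma craving_in_Nset_pair:
  assumes "rh \<in> linorders X" "(a, b) \<in> rh" "craving X rh z \<in> Nset X b {a, b}"
  shows "z = b"
proof (rule ccontr)
  assume "z \<noteq> b"
  have "a \<noteq> b" using assms(2) linordersD(3)[OF assms(1)] by (auto simp: irrefl_def)
  then have "(b, a) \<in> craving X rh z" using assms(3) by (auto simp: Nset_def)
  with \<open>z \<noteq> b\<close> have "(b, a) \<in> rh" by (auto simp: craving_def)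
  with assms(2) show False using linordersD(2,3)[OF assms(1)] by (meson irrefl_def transD)
qed

lemma craving_monotonic_pos:
  assumes "craving_monotonic X rh \<nu>" "rh \<in> linorders X" "z \<in> X" "w \<in> X" "w \<noteq> z"
  shows "0 < \<nu> (craving X rh z)"
proof -
  have mono: "\<nu> (craving X rh y) < \<nu> (craving X rh x) \<and> 0 < \<nu> (craving X rh y)"
    if "x \<in> X" "y \<in> X" "(x, y) \<in> rh" for x y
    using assms(1) that unfolding craving_monotonic_def by blast
  have "(w, z) \<in> rh \<or> (z, w) \<in> rh"
    using linordersD(4)[OF assms(2)] assms(3-5) unfolding total_on_def by blast
  then show ?thesis
    using mono[OF assms(4,3)] mono[OF assms(3,4)] by force
qed

lemma ex_related_pair_and_third:
  assumes "r \<in> linorders X" "3 \<le> card X"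
  obtains a b c where "a \<in> X" "b \<in> X" "c \<in> X" "(a, b) \<in> r" "c \<noteq> a" "c \<noteq> b"
proof -
  obtain T where "T \<subseteq> X" "card T = 3" using obtain_subset_with_card_n[OF assms(2)] by metis
  then obtain x y c where "{x, y, c} \<subseteq> X" "x \<noteq> y" "c \<noteq> x" "c \<noteq> y"
    unfolding card_3_iff by blast
  moreover have "(x, y) \<in> r \<or> (y, x) \<in> r"
    using linordersD(4)[OF assms(1)] calculation unfolding total_on_def by blast
  ultimately show ?thesis using that by blast
qed

text \<open>The probability that the chain for menu A keeps the preference r; the orders that are not
  craving preferences lie outside the support of \<nu> and are always left.\<close>
definition stay_prob :: "'a set \<Rightarrow> 'a rel \<Rightarrow> ('a \<Rightarrow> 'a \<Rightarrow> real) \<Rightarrow> 'a set \<Rightarrow> 'a rel \<Rightarrow> real" where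
  "stay_prob X rh \<phi> A r =
     (if r \<in> craving X rh ` X then \<phi> (maxel r A) (inv_into X (craving X rh) r) else 0)"

lemma stay_prob_craving:
  "y \<in> X \<Longrightarrow> stay_prob X rh \<phi> A (craving X rh y) = \<phi> (maxel (craving X rh y) A) y"
  by (simp add: stay_prob_def inv_into_f_f[OF inj_on_craving])

lemma persistent_craving_repD:
  assumes "persistent_craving_rep X t rh \<nu> \<phi>"
  shows "rh \<in> linorders X" "craving_monotonic X rh \<nu>" "persistence X \<phi>"
    and "\<And>x y r'. x \<in> X \<Longrightarrow> y \<in> X \<Longrightarrow> r' \<in> linorders X \<Longrightarrow>
      t x (craving X rh y) r' = \<phi> x y * (if r' = craving X rh y then 1 else 0) + (1 - \<phi> x y) * \<nu> r'"
    and "\<And>x r r'. x \<in> X \<Longrightarrow> r \<in> linorders X \<Longrightarrow> \<nu> r = 0 \<Longrightarrow> r' \<in> linorders X \<Longrightarrow>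
      t x r r' = \<nu> r'"
  using assms unfolding persistent_craving_rep_def by auto

context
  fixes X :: "'a set" and t rh \<nu> \<phi>
  assumes rep: "persistent_craving_rep X t rh \<nu> \<phi>" and finite: "finite X"
begin

private lemma \<nu>_nonneg: "\<forall>r\<in>linorders X. 0 \<le> \<nu> r"
  and \<nu>_sum: "sum \<nu> (linorders X) = 1"
  and \<nu>_support: "r \<in> linorders X \<Longrightarrow> r \<notin> craving X rh ` X \<Longrightarrow> \<nu> r = 0"
  using persistent_craving_repD(2)[OF rep] unfolding craving_monotonic_def distr_on_def by auto

lemma stay_prob_range:
  assumes "A \<subseteq> X" "A \<noteq> {}" "r \<in> linorders X"
  shows "0 \<le> stay_prob X rh \<phi> A r \<and> stay_prob X rh \<phi> A r < 1"
proof (cases "r \<in> craving X rh ` X")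
  case True
  then obtain y where "y \<in> X" "r = craving X rh y" by blast
  moreover have "maxel r A \<in> X" using maxel_in[OF assms(3) finite assms(1,2)] assms(1) by blast
  ultimately show ?thesis
    using persistent_craving_repD(3)[OF rep] by (simp add: stay_prob_craving persistence_def)
qed (simp add: stay_prob_def)

lemma transition_as_resampling:
  assumes "A \<subseteq> X" "A \<noteq> {}" "r \<in> linorders X" "r' \<in> linorders X"
  shows "t (maxel r A) r r' =
    stay_prob X rh \<phi> A r * (if r' = r then 1 else 0) + (1 - stay_prob X rh \<phi> A r) * \<nu> r'"
proof -
  have "maxel r A \<in> X" using maxel_in[OF assms(3) finite assms(1,2)] assms(1) by blast
  show ?thesis
  proof (cases "r \<in> craving X rh ` X")
    case True
    then obtain y where "y \<in> X" "r = craving X rh y" by blast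
    then show ?thesis
      using persistent_craving_repD(4)[OF rep \<open>maxel r A \<in> X\<close> _ assms(4)]
      by (simp add: stay_prob_craving)
  next
    case False
    then show ?thesis
      using persistent_craving_repD(5)[OF rep \<open>maxel r A \<in> X\<close> assms(3) _ assms(4)]
        \<nu>_support[OF assms(3)]
      by (simp add: stay_prob_def)
  qed
qed

lemma stat_distr_persistent_craving:
  assumes "A \<subseteq> X" "A \<noteq> {}" "r \<in> linorders X"
  shows "stat_distr X t A r = \<nu> r / (1 - stay_prob X rh \<phi> A r) /
    (\<Sum>q\<in>linorders X. \<nu> q / (1 - stay_prob X rh \<phi> A q))"
proof -
  have "stat_distr X t A = (THE \<mu>. stationary_on (linorders X) (\<lambda>r. t (maxel r A) r) \<mu>)"
    unfolding stat_distr_def stationary_def distr_on_def stationary_on_def by (simp add: conj_assoc)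
  also have "\<dots> = (\<lambda>r. if r \<in> linorders X then \<nu> r / (1 - stay_prob X rh \<phi> A r) /
      (\<Sum>q\<in>linorders X. \<nu> q / (1 - stay_prob X rh \<phi> A q)) else 0)"
    by (subst stationary_on_resampling_iff[OF finite_linorders[OF finite] \<nu>_nonneg \<nu>_sum])
      (simp_all add: stay_prob_range[OF assms(1,2)] transition_as_resampling[OF assms(1,2)])
  finally show ?thesis using assms(3) by simp
qed

lemma stat_distr_whole_menu:
  assumes "X \<noteq> {}" "r \<in> linorders X"
  shows "stat_distr X t X r = \<nu> r"
proof -
  have "stay_prob X rh \<phi> X q = 0" for q
  proof (cases "q \<in> craving X rh ` X")
    case True
    then obtain y where "y \<in> X" "q = craving X rh y" by blast
    then show ?thesis
      using maxel_craving_self[OF persistent_craving_repD(1)[OF rep] subset_refl] persistent_craving_repD(3)[OF rep]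
      by (simp add: stay_prob_craving persistence_def)
  qed (simp add: stay_prob_def)
  then show ?thesis using stat_distr_persistent_craving[OF subset_refl assms] \<nu>_sum by simp
qed

lemma choice_prob_whole_menu_ge:
  assumes "b \<in> X"
  shows "\<nu> (craving X rh b) \<le> (\<Sum>r\<in>Nset X b X. stat_distr X t X r)"
proof -
  have rh: "rh \<in> linorders X" by (rule persistent_craving_repD(1)[OF rep])
  have "X \<noteq> {}" using assms by blast
  have Nset_sub: "Nset X b X \<subseteq> linorders X" by (auto simp: Nset_def)
  have nonneg: "0 \<le> stat_distr X t X r" if "r \<in> Nset X b X" for r
    using that Nset_sub stat_distr_whole_menu[OF \<open>X \<noteq> {}\<close>] \<nu>_nonneg by auto
  have "craving X rh b \<in> Nset X b X"
    using craving_in_linorders[OF rh assms] assms by (auto simp: Nset_def intro: craving_top)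
  then have "stat_distr X t X (craving X rh b) \<le> (\<Sum>r\<in>Nset X b X. stat_distr X t X r)"
    using nonneg finite_subset[OF Nset_sub finite_linorders[OF finite]] by (intro member_le_sum) auto
  then show ?thesis
    using stat_distr_whole_menu[OF \<open>X \<noteq> {}\<close> craving_in_linorders[OF rh assms]] by simp
qed

lemma pair_resampling_weights_sum_gt_1:
  assumes "a \<in> X" "b \<in> X" "c \<in> X" "(a, b) \<in> rh" "c \<noteq> a" "c \<noteq> b"
  shows "1 < (\<Sum>q\<in>linorders X. \<nu> q / (1 - stay_prob X rh \<phi> {a, b} q))"
proof -
  have rh: "rh \<in> linorders X" by (rule persistent_craving_repD(1)[OF rep])
  have "maxel (craving X rh c) {a, b} = a"
    using assms by (intro maxel_eqI[OF craving_in_linorders[OF rh assms(3)]]) (auto simp: craving_def)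
  moreover have "0 < \<phi> a c"
    using persistent_craving_repD(3)[OF rep] assms by (auto simp: persistence_def)
  ultimately have "0 < stay_prob X rh \<phi> {a, b} (craving X rh c)"
    using assms(3) by (simp add: stay_prob_craving)
  moreover have "0 < \<nu> (craving X rh c)"
    using craving_monotonic_pos[OF persistent_craving_repD(2)[OF rep] rh assms(3,1) assms(5)[symmetric]] .
  ultimately show ?thesis
    using resampling_weights_sum_gt_1[OF finite_linorders[OF finite] \<nu>_nonneg \<nu>_sum]
      stay_prob_range[of "{a, b}"] assms(1,2) craving_in_linorders[OF rh assms(3)] by blast
qed

lemma choice_prob_pair_lt:
  assumes "a \<in> X" "b \<in> X" "c \<in> X" "(a, b) \<in> rh" "c \<noteq> a" "c \<noteq> b"
  shows "(\<Sum>r\<in>Nset X b {a, b}. stat_distr X t {a, b} r) < \<nu> (craving X rh b)"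
proof -
  define A where "A = {a, b}"
  define S where "S = (\<Sum>q\<in>linorders X. \<nu> q / (1 - stay_prob X rh \<phi> A q))"
  have rh: "rh \<in> linorders X" by (rule persistent_craving_repD(1)[OF rep])
  have A: "A \<subseteq> X" "A \<noteq> {}" using assms(1,2) by (auto simp: A_def)
  have "a \<noteq> b" using assms(4) linordersD(3)[OF rh] by (auto simp: irrefl_def)
  have stay_b: "stay_prob X rh \<phi> A (craving X rh b) = 0"
    using maxel_craving_self[OF rh A(1)] persistent_craving_repD(3)[OF rep] assms(2)
    by (simp add: A_def stay_prob_craving persistence_def)
  have b_in_Nset: "craving X rh b \<in> Nset X b A"
    using craving_in_linorders[OF rh assms(2)] assms \<open>a \<noteq> b\<close>
    by (auto simp: Nset_def A_def intro: craving_top)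
  have "stat_distr X t A r = 0" if "r \<in> Nset X b A - {craving X rh b}" for r
  proof -
    have "r \<in> linorders X" using that by (auto simp: Nset_def)
    moreover have "r \<notin> craving X rh ` X"
      using craving_in_Nset_pair[OF rh assms(4)] that by (auto simp: A_def)
    ultimately show ?thesis using \<nu>_support stat_distr_persistent_craving[OF A] by simp
  qed
  then have "(\<Sum>r\<in>Nset X b A. stat_distr X t A r) = stat_distr X t A (craving X rh b)"
    using sum.remove[OF _ b_in_Nset, of "stat_distr X t A"]
      finite_subset[of "Nset X b A" "linorders X"] finite_linorders[OF finite]
    by (simp add: sum.neutral Nset_def)
  also have "\<dots> = \<nu> (craving X rh b) / S"
    using stat_distr_persistent_craving[OF A craving_in_linorders[OF rh assms(2)]] stay_b
    by (simp add: S_def)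
  also have "\<dots> < \<nu> (craving X rh b)"
    using pair_resampling_weights_sum_gt_1[OF assms]
      craving_monotonic_pos[OF persistent_craving_repD(2)[OF rep] rh assms(2,1) \<open>a \<noteq> b\<close>]
    by (simp add: S_def A_def divide_less_eq)
  finally show ?thesis unfolding A_def .
qed

end

theorem proposition1:
  fixes X :: "'a set" and p :: "'a \<Rightarrow> 'a set \<Rightarrow> real"
  assumes "finite X" and "card X \<ge> 3"
    and "random_choice_rule X p"
    and "consistent_persistent_craving X p"
  shows "\<exists>x A B. x \<in> A \<and> A \<subseteq> B \<and> B \<subseteq> X \<and> p x A < p x B"
proof -
  obtain t rh \<nu> \<phi> where rep: "persistent_craving_rep X t rh \<nu> \<phi>"
    and p_eq: "\<forall>A. A \<subseteq> X \<and> A \<noteq> {} \<longrightarrow> (\<forall>x\<in>A. p x A = (\<Sum>r\<in>Nset X x A. stat_distr X t A r))"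
    using assms(4) unfolding consistent_persistent_craving_def by (elim exE conjE) (rule that)
  obtain a b c where abc: "a \<in> X" "b \<in> X" "c \<in> X" "(a, b) \<in> rh" "c \<noteq> a" "c \<noteq> b"
    using ex_related_pair_and_third[OF persistent_craving_repD(1)[OF rep] assms(2)] by blast
  have pair: "{a, b} \<subseteq> X" using abc by simp
  have "p b {a, b} = (\<Sum>r\<in>Nset X b {a, b}. stat_distr X t {a, b} r)"
    using pair by (intro p_eq[rule_format]) auto
  also have "\<dots> < \<nu> (craving X rh b)"
    by (rule choice_prob_pair_lt[OF rep assms(1) abc])
  also have "\<dots> \<le> (\<Sum>r\<in>Nset X b X. stat_distr X t X r)"
    by (rule choice_prob_whole_menu_ge[OF rep assms(1) abc(2)])
  also have "\<dots> = p b X"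
    using abc(2) by (intro p_eq[rule_format, symmetric]) auto
  finally have "p b {a, b} < p b X" .
  then show ?thesis using pair by (intro exI[of _ b] exI[of _ "{a, b}"] exI[of _ X]) simp
qed

end
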